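(* Let $p$ be a positive integer, $L,E,\sigma>0$ with $L,E\in 2^{-p}\mathbb{Z}$, and $x\in\mathcal{A}_{p,E}$. If $y$ is drawn with probability mass function $f^{(\mathtt{CLap})}_{x,\sigma}$ on $\mathcal{B}_{p,L+E}$, then \[ \mathbb{E}(y)=x\cdot\frac{\sigma(1-e^{-L/\sigma})-e^{-L/\sigma}L}{\sigma(1-e^{-L/\sigma})+e^{-L/\sigma}E}-\frac{2^{-p}}{2}. \]
   Context: For $p\in\mathbb{Z}_{>0}$ and $B>0$, $2^{-p}\mathbb{Z}=\{a/2^p: a\in\mathbb{Z}\}$, $\mathcal{A}_{p,B}:=[-B,B]\cap 2^{-p}\mathbb{Z}$ and $\mathcal{B}_{p,B}:=\mathcal{A}_{p,B}\setminus\{B\}$. The truncated cumulative Laplace mechanism with parameters $L,E,\sigma>0$ maps $x\in\mathcal{A}_{p,E}$ to $y\in\mathcal{B}_{p,L+E}$ with probability $f^{(\mathtt{CLap})}_{x,\sigma}(y)=\frac{1}{\lambda^{(\mathtt{CLap})}_{L,E,\sigma}}\int_y^{y+2^{-p}}e^{-\min(|r-x|,L)/\sigma}dr$, where $\lambda^{(\mathtt{CLap})}_{L,E,\sigma}=\sum_{y\in\mathcal{B}_{p,L+E}}\int_y^{y+2^{-p}}e^{-\min(|r-x|,L)/\sigma}dr$ is the normalizing constant. *)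

theory Defs
  imports "HOL-Analysis.Analysis"
begin

definition dyadic :: "nat \<Rightarrow> real \<Rightarrow> bool" where
  "dyadic p r \<longleftrightarrow> (\<exists>a::int. r = real_of_int a / 2 ^ p)"

definition gridA :: "nat \<Rightarrow> real \<Rightarrow> real set" where
  "gridA p B = {r. dyadic p r \<and> -B \<le> r \<and> r \<le> B}"

definition gridB :: "nat \<Rightarrow> real \<Rightarrow> real set" where
  "gridB p B = gridA p B - {B}"

definition clap_weight :: "nat \<Rightarrow> real \<Rightarrow> real \<Rightarrow> real \<Rightarrow> real \<Rightarrow> real" where
  "clap_weight p L \<sigma> x y =
     integral {y..y + 1 / 2 ^ p} (\<lambda>r. exp (- min \<bar>r - x\<bar> L / \<sigma>))"

definition clap_norm :: "nat \<Rightarrow> real \<Rightarrow> real \<Rightarrow> real \<Rightarrow> real \<Rightarrow> real" where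
  "clap_norm p L E \<sigma> x = (\<Sum>y\<in>gridB p (L + E). clap_weight p L \<sigma> x y)"

definition clap_pmf :: "nat \<Rightarrow> real \<Rightarrow> real \<Rightarrow> real \<Rightarrow> real \<Rightarrow> real \<Rightarrow> real" where
  "clap_pmf p L E \<sigma> x y = clap_weight p L \<sigma> x y / clap_norm p L E \<sigma> x"

end

theory Submission imports Defs begin

text \<open>Write \<open>h = 2^{-p}\<close> and \<open>c = e^{-L/\<sigma>}\<close>, and split the truncated kernel as
  \<open>c + \<phi>(r - x)\<close>, where \<open>\<phi>(t) = e^{-min(|t|,L)/\<sigma>} - c\<close> is even, continuous and supported in
  \<open>[-L,L]\<close>. The constant part spreads mass \<open>c h\<close> uniformly over the \<open>2(L+E)/h\<close> grid points,
  contributing \<open>2c(L+E)\<close> to the normaliser and \<open>-c h (L+E)\<close> to the first moment. Since \<open>L\<close> and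
  \<open>x\<close> lie on the grid, the integrals of \<open>\<phi>(\<cdot> - x)\<close> over the cells are the cell integrals of
  \<open>\<phi>\<close> shifted by \<open>x/h\<close>, all of \<open>\<phi>\<close>'s support stays inside the grid because \<open>|x| \<le> E\<close>, and
  evenness of \<open>\<phi>\<close> pairs the cell \<open>j\<close> with the cell \<open>-1-j\<close>. Hence these integrals add up to
  \<open>2 S\<close> with first moment \<open>(2x - h) S\<close>, where \<open>S = \<integral>\<^sub>0\<^sup>L \<phi> = \<sigma>(1-c) - cL\<close>.\<close>

lemma sum_of_int_symmetric_range:
  assumes "0 \<le> N"
  shows "(\<Sum>k\<in>{-N..<N}. real_of_int k) = - real_of_int N"
  using assms
proof (induction N rule: int_ge_induct)
  case (step N)
  have "{-(N+1)..<N+1} = insert (-(N+1)) (insert N {-N..<N})"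
    using step by auto
  then show ?case using step by simp
qed simp

lemma sum_int_shift:
  fixes H :: "int \<Rightarrow> 'a::comm_monoid_add"
  shows "(\<Sum>k\<in>{a..<b}. H (k - m)) = (\<Sum>j\<in>{a-m..<b-m}. H j)"
  by (rule sum.reindex_bij_witness[where i="\<lambda>j. j + m" and j="\<lambda>k. k - m"]) auto

lemma sum_reflection_symmetric:
  fixes F :: "int \<Rightarrow> real"
  assumes refl: "\<And>j. F (-1-j) = F j" and supp: "\<And>j. j \<ge> M \<or> j < -M \<Longrightarrow> F j = 0"
    and "A \<le> -M" "M \<le> B" "0 \<le> M"
  shows "(\<Sum>j\<in>{A..<B}. F j) = 2 * (\<Sum>j\<in>{0..<M}. F j)"
    and "(\<Sum>j\<in>{A..<B}. real_of_int j * F j) = - (\<Sum>j\<in>{0..<M}. F j)"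
proof -
  have sub: "{-M..<M} \<subseteq> {A..<B}" using assms(3,4) by auto
  have split: "{-M..<M} = {-M..<0} \<union> {0..<M}" using assms(5) by auto
  have reflect: "(\<Sum>j\<in>{-M..<0}. G j) = (\<Sum>j\<in>{0..<M}. G (-1-j))" for G :: "int \<Rightarrow> real"
    by (rule sum.reindex_bij_witness[where i="\<lambda>j. -1-j" and j="\<lambda>j. -1-j"]) auto
  have restrict: "(\<Sum>j\<in>{A..<B}. G j) = (\<Sum>j\<in>{-M..<M}. G j)"
    if "\<And>j. F j = 0 \<Longrightarrow> G j = 0" for G :: "int \<Rightarrow> real"
    by (rule sum.mono_neutral_right[OF _ sub]) (use supp that in force)+
  have "(\<Sum>j\<in>{A..<B}. F j) = (\<Sum>j\<in>{-M..<M}. F j)" by (rule restrict)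
  also have "\<dots> = (\<Sum>j\<in>{-M..<0}. F j) + (\<Sum>j\<in>{0..<M}. F j)"
    unfolding split by (rule sum.union_disjoint) auto
  finally show "(\<Sum>j\<in>{A..<B}. F j) = 2 * (\<Sum>j\<in>{0..<M}. F j)"
    using reflect[of F] refl by simp
  have "(\<Sum>j\<in>{A..<B}. real_of_int j * F j) = (\<Sum>j\<in>{-M..<M}. real_of_int j * F j)"
    by (rule restrict) simp
  also have "\<dots> = (\<Sum>j\<in>{-M..<0}. real_of_int j * F j) + (\<Sum>j\<in>{0..<M}. real_of_int j * F j)"
    unfolding split by (rule sum.union_disjoint) auto
  also have "\<dots> = (\<Sum>j\<in>{0..<M}. real_of_int (-1-j) * F j + real_of_int j * F j)"
    using reflect[of "\<lambda>j. real_of_int j * F j"] refl by (simp add: sum.distrib)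
  finally show "(\<Sum>j\<in>{A..<B}. real_of_int j * F j) = - (\<Sum>j\<in>{0..<M}. F j)"
    by (simp add: algebra_simps sum_negf)
qed

lemma sum_shifted_reflection_symmetric:
  fixes F :: "int \<Rightarrow> real"
  assumes refl: "\<And>j. F (-1-j) = F j" and supp: "\<And>j. j \<ge> M \<or> j < -M \<Longrightarrow> F j = 0"
    and "0 \<le> M" "M + \<bar>m\<bar> \<le> N"
  shows "(\<Sum>k\<in>{-N..<N}. F (k - m)) = 2 * (\<Sum>j\<in>{0..<M}. F j)"
    and "(\<Sum>k\<in>{-N..<N}. real_of_int k * F (k - m))
           = (2 * real_of_int m - 1) * (\<Sum>j\<in>{0..<M}. F j)"
proof -
  have bounds: "-N-m \<le> -M" "M \<le> N-m" using assms(4) by auto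
  note sums = sum_reflection_symmetric[of F M "-N-m" "N-m", OF refl supp bounds \<open>0 \<le> M\<close>]
  show "(\<Sum>k\<in>{-N..<N}. F (k - m)) = 2 * (\<Sum>j\<in>{0..<M}. F j)"
    using sums(1) by (simp add: sum_int_shift)
  have "(\<Sum>k\<in>{-N..<N}. real_of_int k * F (k - m))
      = (\<Sum>j\<in>{-N-m..<N-m}. real_of_int j * F j + real_of_int m * F j)"
    using sum_int_shift[where H="\<lambda>j. real_of_int (j + m) * F j" and a="-N" and b=N and m=m]
    by (simp add: algebra_simps)
  then show "(\<Sum>k\<in>{-N..<N}. real_of_int k * F (k - m))
      = (2 * real_of_int m - 1) * (\<Sum>j\<in>{0..<M}. F j)"
    using sums by (simp add: sum.distrib flip: sum_distrib_left) (simp add: algebra_simps)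
qed

definition cell_integral :: "real \<Rightarrow> (real \<Rightarrow> real) \<Rightarrow> int \<Rightarrow> real" where
  "cell_integral h f j = integral {real_of_int j * h .. real_of_int j * h + h} f"

lemma sum_cell_integral:
  assumes cont: "continuous_on UNIV f" and "h > 0" and "a \<le> b"
  shows "(\<Sum>k\<in>{a..<b}. cell_integral h f k) = integral {real_of_int a * h .. real_of_int b * h} f"
  using \<open>a \<le> b\<close>
proof (induction b rule: int_ge_induct)
  case (step i)
  have "{a..<i+1} = insert i {a..<i}" using step by auto
  then have "(\<Sum>k\<in>{a..<i+1}. cell_integral h f k)
      = integral {real_of_int a * h .. real_of_int i * h} f
        + integral {real_of_int i * h .. real_of_int (i+1) * h} f"
    using step by (simp add: cell_integral_def algebra_simps)
  also have "\<dots> = integral {real_of_int a * h .. real_of_int (i+1) * h} f"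
    using step \<open>h > 0\<close>
    by (intro Henstock_Kurzweil_Integration.integral_combine integrable_continuous_interval
        continuous_on_subset[OF cont]) (auto intro!: mult_right_mono)
  finally show ?case .
qed simp

lemma cell_integral_reflect:
  assumes even: "\<And>t. f (-t) = f t"
  shows "cell_integral h f (-1-j) = cell_integral h f j"
proof -
  have "integral {- (real_of_int j * h + h) .. - (real_of_int j * h)} (\<lambda>t. f (-t))
      = cell_integral h f j"
    unfolding cell_integral_def by (rule Henstock_Kurzweil_Integration.integral_reflect_real)
  then show ?thesis
    unfolding cell_integral_def even by (simp add: algebra_simps)
qed

lemma cell_integral_outside_support:
  assumes "h > 0" and supp: "\<And>t. \<bar>t\<bar> \<ge> real_of_int M * h \<Longrightarrow> f t = 0"
    and "j \<ge> M \<or> j < -M"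
  shows "cell_integral h f j = 0"
proof -
  have "f t = 0" if t: "t \<in> {real_of_int j * h .. real_of_int j * h + h}" for t
  proof (rule supp)
    from \<open>j \<ge> M \<or> j < -M\<close> consider "M \<le> j" | "j + 1 \<le> -M" by linarith
    then show "\<bar>t\<bar> \<ge> real_of_int M * h"
    proof cases
      case 1
      then have "real_of_int M * h \<le> real_of_int j * h" using \<open>h > 0\<close> by simp
      then show ?thesis using t by auto
    next
      case 2
      then have "real_of_int (j + 1) * h \<le> real_of_int (-M) * h" using \<open>h > 0\<close>
        by (intro mult_right_mono) auto
      then show ?thesis using t by (auto simp: algebra_simps)
    qed
  qed
  then have "cell_integral h f j = integral {real_of_int j * h .. real_of_int j * h + h} (\<lambda>_. 0)"
    unfolding cell_integral_def by (rule integral_cong)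
  then show ?thesis by simp
qed

definition lap_excess :: "real \<Rightarrow> real \<Rightarrow> real \<Rightarrow> real" where
  "lap_excess L \<sigma> t = exp (- min \<bar>t\<bar> L / \<sigma>) - exp (- L / \<sigma>)"

lemma continuous_on_lap_excess: "continuous_on A (lap_excess L \<sigma>)"
  unfolding lap_excess_def divide_inverse by (intro continuous_intros)

lemma lap_excess_minus: "lap_excess L \<sigma> (-t) = lap_excess L \<sigma> t"
  unfolding lap_excess_def by simp

lemma lap_excess_eq_0: "\<bar>t\<bar> \<ge> L \<Longrightarrow> lap_excess L \<sigma> t = 0"
  unfolding lap_excess_def by (simp add: min_def)

lemma integral_lap_excess:
  assumes "0 \<le> L" and "\<sigma> \<noteq> 0"
  shows "integral {0..L} (lap_excess L \<sigma>) = \<sigma> * (1 - exp (- L / \<sigma>)) - L * exp (- L / \<sigma>)"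
proof -
  let ?c = "exp (- L / \<sigma>)"
  let ?F = "\<lambda>t. - \<sigma> * exp (- t / \<sigma>) - ?c * t"
  have "((\<lambda>t. exp (- t / \<sigma>) - ?c) has_integral (?F L - ?F 0)) {0..L}"
  proof (rule fundamental_theorem_of_calculus)
    fix t assume "t \<in> {0..L}"
    show "(?F has_vector_derivative (exp (- t / \<sigma>) - ?c)) (at t within {0..L})"
      unfolding has_real_derivative_iff_has_vector_derivative[symmetric]
      using \<open>\<sigma> \<noteq> 0\<close> by (auto intro!: derivative_eq_intros)
  qed (use \<open>0 \<le> L\<close> in simp)
  moreover have "integral {0..L} (lap_excess L \<sigma>) = integral {0..L} (\<lambda>t. exp (- t / \<sigma>) - ?c)"
    by (intro integral_cong) (auto simp: lap_excess_def min_def)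
  ultimately show ?thesis
    using \<open>\<sigma> \<noteq> 0\<close> by (simp add: integral_unique algebra_simps)
qed

lemma sums_cell_integral_lap_excess:
  assumes "h > 0" and L: "L = real_of_int M * h" and "0 \<le> M" "M + \<bar>m\<bar> \<le> N"
  shows "(\<Sum>k\<in>{-N..<N}. cell_integral h (lap_excess L \<sigma>) (k - m))
           = 2 * integral {0..L} (lap_excess L \<sigma>)"
    and "(\<Sum>k\<in>{-N..<N}. real_of_int k * cell_integral h (lap_excess L \<sigma>) (k - m))
           = (2 * real_of_int m - 1) * integral {0..L} (lap_excess L \<sigma>)"
proof -
  let ?I = "cell_integral h (lap_excess L \<sigma>)"
  have refl: "?I (-1-j) = ?I j" for j
    by (rule cell_integral_reflect) (rule lap_excess_minus)
  have supp: "?I j = 0" if "j \<ge> M \<or> j < -M" for j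
    using cell_integral_outside_support[OF \<open>h > 0\<close> _ that] lap_excess_eq_0 L by blast
  have half: "(\<Sum>j\<in>{0..<M}. ?I j) = integral {0..L} (lap_excess L \<sigma>)"
    using sum_cell_integral[OF continuous_on_lap_excess \<open>h > 0\<close> \<open>0 \<le> M\<close>] L by simp
  show "(\<Sum>k\<in>{-N..<N}. ?I (k - m)) = 2 * integral {0..L} (lap_excess L \<sigma>)"
    and "(\<Sum>k\<in>{-N..<N}. real_of_int k * ?I (k - m))
           = (2 * real_of_int m - 1) * integral {0..L} (lap_excess L \<sigma>)"
    using sum_shifted_reflection_symmetric[where F="?I", OF refl supp assms(3,4)]
    unfolding half by simp_all
qed

lemma gridB_mem:
  "real_of_int a / 2 ^ p \<in> gridB p (real_of_int N / 2 ^ p) \<longleftrightarrow> a \<in> {-N..<N}"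
proof -
  have "dyadic p (real_of_int a / 2 ^ p)" unfolding dyadic_def by blast
  moreover have "- (real_of_int N / 2 ^ p) \<le> real_of_int a / 2 ^ p \<longleftrightarrow> -N \<le> a"
    by (simp add: field_simps) linarith
  moreover have "real_of_int a / 2 ^ p \<le> real_of_int N / 2 ^ p \<longleftrightarrow> a \<le> N"
    by (simp add: divide_le_cancel)
  ultimately show ?thesis
    unfolding gridB_def gridA_def by auto
qed

lemma gridB_eq_image:
  "gridB p (real_of_int N / 2 ^ p) = (\<lambda>k. real_of_int k / 2 ^ p) ` {-N..<N}"
proof (intro set_eqI iffI)
  fix y assume y: "y \<in> gridB p (real_of_int N / 2 ^ p)"
  then obtain a :: int where "y = real_of_int a / 2 ^ p"
    unfolding gridB_def gridA_def dyadic_def by blast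
  with y show "y \<in> (\<lambda>k. real_of_int k / 2 ^ p) ` {-N..<N}"
    using gridB_mem by blast
qed (use gridB_mem in blast)

lemma sum_gridB:
  "(\<Sum>y\<in>gridB p (real_of_int N / 2 ^ p). g y) = (\<Sum>k\<in>{-N..<N}. g (real_of_int k / 2 ^ p))"
proof -
  have "inj_on (\<lambda>k. real_of_int k / 2 ^ p) {-N..<N}"
    by (auto simp: inj_on_def)
  then show ?thesis
    unfolding gridB_eq_image by (simp add: sum.reindex)
qed

lemma clap_weight_eq:
  "clap_weight p L \<sigma> x y
     = exp (- L / \<sigma>) / 2 ^ p + integral {y - x .. y - x + 1 / 2 ^ p} (lap_excess L \<sigma>)"
proof -
  let ?h = "1 / 2 ^ p :: real"
  have kernel: "exp (- min \<bar>r - x\<bar> L / \<sigma>) = exp (- L / \<sigma>) + lap_excess L \<sigma> (r - x)" for r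
    unfolding lap_excess_def by simp
  have "clap_weight p L \<sigma> x y
      = integral {y .. y + ?h} (\<lambda>r. exp (- L / \<sigma>))
        + integral {y .. y + ?h} (\<lambda>r. lap_excess L \<sigma> (r - x))"
    unfolding clap_weight_def kernel
    by (rule integral_add; intro integrable_continuous_interval
        continuous_on_compose2[OF continuous_on_lap_excess] continuous_intros) auto
  moreover have "integral {y .. y + ?h} (\<lambda>r. lap_excess L \<sigma> (r - x))
      = integral {y - x .. y - x + ?h} (lap_excess L \<sigma>)"
    using integral_shift_real_ivl[of "y - x" "- x" "y - x + ?h" "lap_excess L \<sigma>"] by simp
  ultimately show ?thesis by simp
qed

lemma clap_weight_grid:
  assumes "x = real_of_int m / 2 ^ p"
  shows "clap_weight p L \<sigma> x (real_of_int k / 2 ^ p)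
           = exp (- L / \<sigma>) / 2 ^ p + cell_integral (1 / 2 ^ p) (lap_excess L \<sigma>) (k - m)"
proof -
  have "real_of_int k / 2 ^ p - x = real_of_int (k - m) * (1 / 2 ^ p)"
    using assms by (simp add: diff_divide_distrib)
  then show ?thesis
    unfolding clap_weight_eq cell_integral_def by simp
qed

context
  fixes p :: nat and L E \<sigma> x :: real and M K m :: int
  assumes \<sigma>: "\<sigma> > 0" and M: "0 \<le> M" and m: "\<bar>m\<bar> \<le> K"
    and L: "L = real_of_int M / 2 ^ p" and E: "E = real_of_int K / 2 ^ p"
    and x: "x = real_of_int m / 2 ^ p"
begin

lemma gridB_clap_support: "gridB p (L + E) = gridB p (real_of_int (M + K) / 2 ^ p)"
  using L E by (simp add: add_divide_distrib)

lemma clap_norm_eq: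
  "clap_norm p L E \<sigma> x = 2 * (\<sigma> * (1 - exp (- L / \<sigma>)) + exp (- L / \<sigma>) * E)"
proof -
  define h :: real where "h = 1 / 2 ^ p"
  define c where "c = exp (- L / \<sigma>)"
  define N where "N = M + K"
  have NLE: "real_of_int N * h = L + E"
    using L E by (simp add: N_def h_def add_divide_distrib)
  have "clap_norm p L E \<sigma> x
      = (\<Sum>k\<in>{-N..<N}. c * h + cell_integral h (lap_excess L \<sigma>) (k - m))"
    unfolding clap_norm_def gridB_clap_support sum_gridB clap_weight_grid[OF x]
    by (simp add: N_def c_def h_def)
  also have "\<dots> = 2 * real_of_int N * c * h + 2 * integral {0..L} (lap_excess L \<sigma>)"
    using sums_cell_integral_lap_excess(1)[of h L M m N] M m L
    by (simp add: sum.distrib N_def h_def)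
  also have "\<dots> = 2 * c * (L + E) + 2 * (\<sigma> * (1 - c) - L * c)"
    using integral_lap_excess[of L \<sigma>] NLE L M \<sigma> by (simp add: c_def)
  finally show ?thesis by (simp add: c_def algebra_simps)
qed

lemma clap_first_moment_eq:
  "(\<Sum>y\<in>gridB p (L + E). y * clap_weight p L \<sigma> x y)
     = 2 * x * (\<sigma> * (1 - exp (- L / \<sigma>)) - exp (- L / \<sigma>) * L)
       - (\<sigma> * (1 - exp (- L / \<sigma>)) + exp (- L / \<sigma>) * E) / 2 ^ p"
proof -
  define h :: real where "h = 1 / 2 ^ p"
  define c where "c = exp (- L / \<sigma>)"
  define S where "S = integral {0..L} (lap_excess L \<sigma>)"
  define N where "N = M + K"
  let ?I = "cell_integral h (lap_excess L \<sigma>)"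
  have "0 \<le> L" using L M by simp
  then have S_value: "S = \<sigma> * (1 - c) - L * c"
    unfolding S_def c_def using integral_lap_excess \<sigma> by simp
  have xh: "x = real_of_int m * h"
    using x by (simp add: h_def)
  have NLE: "real_of_int N * h = L + E"
    using L E by (simp add: N_def h_def add_divide_distrib)
  have "(\<Sum>y\<in>gridB p (L + E). y * clap_weight p L \<sigma> x y)
      = (\<Sum>k\<in>{-N..<N}. real_of_int k * h * (c * h + ?I (k - m)))"
    unfolding gridB_clap_support sum_gridB clap_weight_grid[OF x]
    by (simp add: N_def c_def h_def)
  also have "\<dots> = c * h * h * (\<Sum>k\<in>{-N..<N}. real_of_int k)
                  + h * (\<Sum>k\<in>{-N..<N}. real_of_int k * ?I (k - m))"
    by (simp add: algebra_simps sum.distrib sum_distrib_left)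
  also have "\<dots> = c * h * h * (- real_of_int N) + h * ((2 * real_of_int m - 1) * S)"
    using sum_of_int_symmetric_range[of N] sums_cell_integral_lap_excess(2)[of h L M m N] M m L
    by (simp add: N_def h_def S_def)
  also have "\<dots> = - c * h * (L + E) + (2 * x - h) * S"
    unfolding NLE[symmetric] xh by (simp add: algebra_simps)
  also have "\<dots> = 2 * x * (\<sigma> * (1 - c) - c * L) - h * (\<sigma> * (1 - c) + c * E)"
    unfolding S_value by (simp add: algebra_simps)
  finally show ?thesis by (simp add: c_def h_def)
qed

end

theorem mainTheorem11:
  fixes p :: nat and L E \<sigma> x :: real
  assumes "p > 0" and "L > 0" and "E > 0" and "\<sigma> > 0"
    and "dyadic p L" and "dyadic p E"
    and "x \<in> gridA p E"
  shows "(\<Sum>y\<in>gridB p (L + E). y * clap_pmf p L E \<sigma> x y) =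
    x * ((\<sigma> * (1 - exp (- L / \<sigma>)) - exp (- L / \<sigma>) * L)
         / (\<sigma> * (1 - exp (- L / \<sigma>)) + exp (- L / \<sigma>) * E))
    - (1 / 2 ^ p) / 2"
proof -
  obtain M K m :: int where L: "L = real_of_int M / 2 ^ p" and E: "E = real_of_int K / 2 ^ p"
    and x: "x = real_of_int m / 2 ^ p"
    using assms(5-7) unfolding dyadic_def gridA_def by blast
  have M: "0 \<le> M" using L \<open>L > 0\<close> by (simp add: zero_less_divide_iff)
  have "-E \<le> x" "x \<le> E" using assms(7) unfolding gridA_def by auto
  then have m: "\<bar>m\<bar> \<le> K" unfolding x E by (simp add: field_simps abs_le_iff)
  note grid_params = \<open>\<sigma> > 0\<close> M m L E x
  define c where "c = exp (- L / \<sigma>)"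
  have "0 < c" "c < 1" using \<open>L > 0\<close> \<open>\<sigma> > 0\<close> by (simp_all add: c_def)
  then have Q_pos: "\<sigma> * (1 - c) + c * E > 0"
    using \<open>\<sigma> > 0\<close> \<open>E > 0\<close> by (simp add: add_pos_pos)
  have "(\<Sum>y\<in>gridB p (L + E). y * clap_pmf p L E \<sigma> x y)
      = (\<Sum>y\<in>gridB p (L + E). y * clap_weight p L \<sigma> x y) / clap_norm p L E \<sigma> x"
    unfolding clap_pmf_def by (simp add: sum_divide_distrib)
  also have "\<dots> = (2 * x * (\<sigma> * (1 - c) - c * L) - (\<sigma> * (1 - c) + c * E) / 2 ^ p)
                  / (2 * (\<sigma> * (1 - c) + c * E))"
    unfolding clap_first_moment_eq[OF grid_params] clap_norm_eq[OF grid_params] c_def ..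
  finally show ?thesis
    using Q_pos by (simp add: c_def field_simps)
qed

end
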